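(* Let $d\ge 2$, let $\mathcal{K}=\{k_1,\ldots,k_r\}\subset\{1,\ldots,d-1\}$ (with $k_1,\ldots,k_r$ distinct) and $t\in\mathbb{N}_0$ be such that $\min\{k_1,d-k_1\}\ge\min\{k_2,d-k_2\}\ge\cdots\ge\min\{k_r,d-k_r\}$. Then, with $s:=\min\{t+1,|\mathcal{K}|\}$, $$\dim\big(\mathrm{Pol}_t(\mathcal{G}_{\mathcal{K},d})\big)\ \ge\ \sum_{i=1}^{s}\dim\big(\mathrm{Pol}_{t-i+1}(\mathcal{G}_{k_i,d})\big).$$
   Context: $\mathbb{R}^{d\times d}_{\mathrm{sym}}$ denotes the real symmetric $d\times d$ matrices. For $1\le k\le d-1$, the Grassmannian is $\mathcal{G}_{k,d}=\{P\in\mathbb{R}^{d\times d}_{\mathrm{sym}}:P^2=P,\ \mathrm{Tr}(P)=k\}$, and for nonempty $\mathcal{K}\subset\{1,\ldots,d-1\}$, $\mathcal{G}_{\mathcal{K},d}=\bigcup_{k\in\mathcal{K}}\mathcal{G}_{k,d}$. $\mathrm{Pol}_t(\mathbb{R}^{d\times d}_{\mathrm{sym}})$ is the space of real polynomials of total degree at most $t$ in the matrix entries, and for a subset $M\subset\mathbb{R}^{d\times d}_{\mathrm{sym}}$ (such as $\mathcal{G}_{k,d}$ or $\mathcal{G}_{\mathcal{K},d}$), $\mathrm{Pol}_t(M)=\{f|_M: f\in\mathrm{Pol}_t(\mathbb{R}^{d\times d}_{\mathrm{sym}})\}$. *)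

theory Defs
  imports "HOL-Analysis.Analysis" "HOL-Library.Function_Algebras"
begin

definition symmat :: "(real^'n^'n) set" where
  "symmat = {A. transpose A = A}"

text \<open>Grassmannian G_{k,d}: symmetric idempotents of trace k.\<close>
definition grass :: "nat \<Rightarrow> (real^'n^'n) set" where
  "grass k = {P. transpose P = P \<and> P ** P = P \<and> trace P = real k}"

definition grassK :: "nat set \<Rightarrow> (real^'n^'n) set" where
  "grassK K = (\<Union>k\<in>K. grass k)"

definition monom_mat :: "('n \<times> 'n \<Rightarrow> nat) \<Rightarrow> real^'n^'n \<Rightarrow> real" where
  "monom_mat \<alpha> A = (\<Prod>ij\<in>UNIV. (A $ fst ij $ snd ij) ^ \<alpha> ij)"

definition mdeg :: "('n::finite \<times> 'n \<Rightarrow> nat) \<Rightarrow> nat" where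
  "mdeg \<alpha> = (\<Sum>ij\<in>UNIV. \<alpha> ij)"

definition PolSym :: "nat \<Rightarrow> (real^'n::finite^'n \<Rightarrow> real) set" where
  "PolSym t = {p. \<exists>F c. finite F \<and> (\<forall>\<alpha>\<in>F. mdeg \<alpha> \<le> t) \<and>
       p = (\<lambda>A. if A \<in> symmat then (\<Sum>\<alpha>\<in>F. c \<alpha> * monom_mat \<alpha> A) else 0)}"

text \<open>Pol_t(M) = restrictions to M (extended by 0 outside M) of polynomials of degree <= t.\<close>
definition PolOn :: "nat \<Rightarrow> (real^'n::finite^'n) set \<Rightarrow> (real^'n^'n \<Rightarrow> real) set" where
  "PolOn t M = {(\<lambda>A. if A \<in> M then p A else 0) | p. p \<in> PolSym t}"

definition fdim :: "('a \<Rightarrow> real) set \<Rightarrow> nat" where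
  "fdim S = vector_space.dim (\<lambda>c f x. c * f x) S"

end

theory Submission
  imports Defs
begin

text \<open>
  For distinct ranks \<open>k\<^sub>0, \<dots>, k\<^sub>n\<^sub>-\<^sub>1\<close> the polynomial
  \<open>w\<^sub>i(A) = \<Prod>\<^sub>j\<^sub><\<^sub>i (tr A - k\<^sub>j) / (k\<^sub>i - k\<^sub>j)\<close> has degree \<open>i\<close>, equals \<open>1\<close> on
  \<open>G(k\<^sub>i)\<close> and vanishes on \<open>G(k\<^sub>j)\<close> for \<open>j < i\<close>. Multiplying a polynomial representative of
  each basis element of \<open>Pol\<^sub>t\<^sub>-\<^sub>i(G(k\<^sub>i))\<close> by \<open>w\<^sub>i\<close> yields an element of \<open>Pol\<^sub>t(G(K))\<close>.
  The family of all these lifts is block triangular: restricted to \<open>G(k\<^sub>i)\<close>, block \<open>i\<close>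
  reproduces the chosen basis while all later blocks vanish. Hence it is linearly independent
  and has the sum of the dimensions as its size.
\<close>

interpretation real_fun: vector_space "\<lambda>(c::real) (f::'a \<Rightarrow> real) x. c * f x"
  by unfold_locales (auto simp: fun_eq_iff algebra_simps)

lemma fdim_eq_dim: "fdim S = real_fun.dim S"
  unfolding fdim_def ..

lemma sum_fun_apply: "(sum g T) x = (\<Sum>v\<in>T. g v x)"
  by (induct T rule: infinite_finite_induct) auto

lemma finite_basis_exists:
  assumes "V \<subseteq> real_fun.span W" "finite W"
  obtains B where "finite B" "B \<subseteq> V" "real_fun.independent B" "V \<subseteq> real_fun.span B"
    "card B = fdim V"
proof -
  obtain B where B: "B \<subseteq> V" "real_fun.independent B" "V \<subseteq> real_fun.span B"
      "card B = real_fun.dim V"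
    using real_fun.basis_exists by blast
  have "finite B"
    using real_fun.independent_span_bound[OF assms(2) B(2)] B(1) assms(1) by blast
  with B that show ?thesis by (simp add: fdim_eq_dim)
qed

lemma card_le_fdim:
  assumes "V \<subseteq> real_fun.span W" "finite W" "S \<subseteq> V" "real_fun.independent S"
  shows "card S \<le> fdim V"
proof -
  obtain B where B: "finite B" "V \<subseteq> real_fun.span B" "card B = fdim V"
    by (rule finite_basis_exists[OF assms(1,2)]) blast
  have "S \<subseteq> real_fun.span B"
    using assms(3) B(2) by blast
  then show ?thesis
    using real_fun.independent_span_bound[OF B(1) assms(4)] B(3) by simp
qed

lemma coefficients_zero_by_restriction:
  fixes X Y :: "('a \<Rightarrow> real) set" and G :: "'a set"
  defines "R \<equiv> \<lambda>f x. if x \<in> G then f x else 0"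
  assumes Y_vanish: "\<And>y x. y \<in> Y \<Longrightarrow> x \<in> G \<Longrightarrow> y x = 0"
    and R_inj: "inj_on R X" and R_indep: "real_fun.independent (R ` X)"
    and T: "finite T" "T \<subseteq> X \<union> Y" and T0: "\<And>x. (\<Sum>w\<in>T. u w * w x) = 0"
    and w: "w \<in> T \<inter> X"
  shows "u w = 0"
proof -
  have RT0: "(\<Sum>w\<in>T \<inter> X. u w * R w x) = 0" for x
  proof (cases "x \<in> G")
    case True
    have "(\<Sum>w\<in>T \<inter> X. u w * R w x) = (\<Sum>w\<in>T \<inter> X. u w * w x)"
      using True by (simp add: R_def)
    also have "\<dots> = (\<Sum>w\<in>T. u w * w x)"
      using T Y_vanish True by (intro sum.mono_neutral_left) auto
    finally show ?thesis using T0 by simp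
  qed (simp add: R_def)
  have inj: "inj_on R (T \<inter> X)"
    using R_inj inj_on_subset by blast
  define c where "c = u \<circ> the_inv_into (T \<inter> X) R"
  have "(\<Sum>r\<in>R ` (T \<inter> X). (\<lambda>x. c r * r x)) = (\<Sum>w\<in>T \<inter> X. (\<lambda>x. u w * R w x))"
    by (simp add: sum.reindex[OF inj] c_def the_inv_into_f_f[OF inj])
  also have "\<dots> = 0"
    using RT0 by (simp add: fun_eq_iff sum_fun_apply)
  finally have "(\<Sum>r\<in>R ` (T \<inter> X). (\<lambda>x. c r * r x)) = 0" .
  moreover have "finite (R ` (T \<inter> X))" "R ` (T \<inter> X) \<subseteq> R ` X"
    using T(1) by auto
  ultimately have "c (R w) = 0"
    using real_fun.independentD[OF R_indep] w by blast
  then show ?thesis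
    using w by (simp add: c_def the_inv_into_f_f[OF inj])
qed

lemma independent_Un_vanishing:
  fixes X Y :: "('a \<Rightarrow> real) set" and G :: "'a set"
  defines "R \<equiv> \<lambda>f x. if x \<in> G then f x else 0"
  assumes Y: "real_fun.independent Y"
    and Y_vanish: "\<And>y x. y \<in> Y \<Longrightarrow> x \<in> G \<Longrightarrow> y x = 0"
    and R_inj: "inj_on R X" and R_indep: "real_fun.independent (R ` X)"
  shows "real_fun.independent (X \<union> Y)" and "X \<inter> Y = {}"
proof -
  show "X \<inter> Y = {}"
  proof (rule ccontr)
    assume "X \<inter> Y \<noteq> {}"
    then obtain y where "y \<in> X" "y \<in> Y" by blast
    then have "0 \<in> R ` X"
      using Y_vanish by (intro image_eqI[of _ _ y]) (auto simp: R_def)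
    with R_indep show False by (metis real_fun.dependent_zero)
  qed
  show "real_fun.independent (X \<union> Y)"
    unfolding real_fun.independent_explicit_module
  proof (intro allI impI)
    fix T u v
    assume T: "finite T" "T \<subseteq> X \<union> Y" "(\<Sum>v\<in>T. (\<lambda>x. u v * v x)) = 0" "v \<in> T"
    have T0: "(\<Sum>w\<in>T. u w * w x) = 0" for x
      using fun_cong[OF T(3), of x] by (simp add: sum_fun_apply)
    have uX: "u w = 0" if "w \<in> T \<inter> X" for w
      using Y_vanish R_inj R_indep T(1,2) T0 that unfolding R_def
      by (rule coefficients_zero_by_restriction)
    have "(\<Sum>w\<in>T \<inter> Y. (\<lambda>x. u w * w x)) = (\<Sum>w\<in>T. (\<lambda>x. u w * w x))"
      using T(1,2) uX by (intro sum.mono_neutral_left) (auto simp: fun_eq_iff)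
    then have "(\<Sum>w\<in>T \<inter> Y. (\<lambda>x. u w * w x)) = 0"
      using T(3) by simp
    then show "u v = 0"
      using real_fun.independentD[OF Y, of "T \<inter> Y"] uX T by blast
  qed
qed

lemma independent_triangular_UN:
  fixes G :: "nat \<Rightarrow> 'a set" and B :: "nat \<Rightarrow> ('a \<Rightarrow> real) set"
    and L :: "nat \<Rightarrow> ('a \<Rightarrow> real) \<Rightarrow> 'a \<Rightarrow> real"
  assumes B_finite: "\<And>i. i < n \<Longrightarrow> finite (B i)"
    and B_indep: "\<And>i. i < n \<Longrightarrow> real_fun.independent (B i)"
    and B_vanish: "\<And>i b x. i < n \<Longrightarrow> b \<in> B i \<Longrightarrow> x \<notin> G i \<Longrightarrow> b x = 0"
    and L_diag: "\<And>i b x. i < n \<Longrightarrow> b \<in> B i \<Longrightarrow> x \<in> G i \<Longrightarrow> L i b x = b x"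
    and L_below: "\<And>i j b x. j < i \<Longrightarrow> i < n \<Longrightarrow> b \<in> B i \<Longrightarrow> x \<in> G j \<Longrightarrow> L i b x = 0"
  shows "real_fun.independent (\<Union>i<n. L i ` B i) \<and> card (\<Union>i<n. L i ` B i) = (\<Sum>i<n. card (B i))"
proof -
  \<comment> \<open>Descending induction: restriction to \<open>G k\<close> recovers \<open>B k\<close> and kills every later block.\<close>
  have "real_fun.independent (\<Union>i\<in>{m..<n}. L i ` B i) \<and> finite (\<Union>i\<in>{m..<n}. L i ` B i)
      \<and> card (\<Union>i\<in>{m..<n}. L i ` B i) = (\<Sum>i\<in>{m..<n}. card (B i))" if "m \<le> n" for m
    using that
  proof (induction m rule: inc_induct)
    case (step k)
    define R where "R f = (\<lambda>x. if x \<in> G k then f x else 0)" for f :: "'a \<Rightarrow> real"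
    define X where "X = L k ` B k"
    define Y where "Y = (\<Union>i\<in>{Suc k..<n}. L i ` B i)"
    have R_L: "R (L k b) = b" if "b \<in> B k" for b
      using L_diag[OF step.hyps(2) that] B_vanish[OF step.hyps(2) that] by (auto simp: R_def)
    have "inj_on (L k) (B k)"
      by (metis R_L inj_onI)
    then have card_X: "card X = card (B k)"
      by (simp add: X_def card_image)
    have "R ` X = B k"
      by (force simp: X_def image_comp R_L)
    moreover have "inj_on R X"
      by (auto simp: X_def R_L intro: inj_onI)
    moreover have "y x = 0" if "y \<in> Y" "x \<in> G k" for y x
      using that by (auto simp: Y_def Suc_le_eq intro!: L_below)
    ultimately have "real_fun.independent (X \<union> Y)" "X \<inter> Y = {}"
      using independent_Un_vanishing[of Y "G k" X] B_indep[OF step.hyps(2)] step.IH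
      unfolding R_def Y_def by auto
    moreover have "{k..<n} = insert k {Suc k..<n}"
      using step.hyps(2) by auto
    then have "(\<Union>i\<in>{k..<n}. L i ` B i) = X \<union> Y"
      by (simp add: X_def Y_def)
    moreover have "finite X"
      using B_finite[OF step.hyps(2)] by (simp add: X_def)
    ultimately show ?case
      using step.IH card_X step.hyps(2)
      by (simp add: Y_def card_Un_disjoint sum.atLeast_Suc_lessThan)
  qed (simp add: real_fun.independent_empty)
  from this[of 0] show ?thesis
    by (simp add: atLeast0LessThan)
qed

definition matrix_poly :: "nat \<Rightarrow> (real^'n::finite^'n \<Rightarrow> real) \<Rightarrow> bool" where
  "matrix_poly t f \<longleftrightarrow>
     (\<exists>F c. finite F \<and> (\<forall>\<alpha>\<in>F. mdeg \<alpha> \<le> t) \<and> f = (\<lambda>A. \<Sum>\<alpha>\<in>F. c \<alpha> * monom_mat \<alpha> A))"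

lemma matrix_poly_sum_monoms:
  fixes a :: "'i \<Rightarrow> ('n::finite \<times> 'n \<Rightarrow> nat)"
  assumes "finite I" "\<And>i. i \<in> I \<Longrightarrow> mdeg (a i) \<le> t"
  shows "matrix_poly t (\<lambda>A. \<Sum>i\<in>I. c i * monom_mat (a i) A)"
proof -
  define c' where "c' \<gamma> = (\<Sum>i\<in>{i\<in>I. a i = \<gamma>}. c i)" for \<gamma>
  have "(\<Sum>i\<in>I. c i * monom_mat (a i) A) = (\<Sum>\<gamma>\<in>a ` I. c' \<gamma> * monom_mat \<gamma> A)" for A
  proof -
    have "(\<Sum>i\<in>I. c i * monom_mat (a i) A)
        = (\<Sum>\<gamma>\<in>a ` I. \<Sum>i\<in>{i\<in>I. a i = \<gamma>}. c i * monom_mat (a i) A)"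
      by (rule sum.image_gen[OF assms(1)])
    also have "\<dots> = (\<Sum>\<gamma>\<in>a ` I. c' \<gamma> * monom_mat \<gamma> A)"
      unfolding c'_def sum_distrib_right by (intro sum.cong refl) auto
    finally show ?thesis .
  qed
  then show ?thesis
    unfolding matrix_poly_def using assms by (intro exI[of _ "a ` I"] exI[of _ c']) auto
qed

lemma matrix_poly_mono: "matrix_poly s f \<Longrightarrow> s \<le> t \<Longrightarrow> matrix_poly t f"
  unfolding matrix_poly_def by (blast intro: order_trans)

lemma matrix_poly_const: "matrix_poly 0 (\<lambda>A. c)"
  using matrix_poly_sum_monoms[of "{()}" "\<lambda>_. \<lambda>_. 0" 0 "\<lambda>_. c"]
  by (simp add: mdeg_def monom_mat_def)

lemma matrix_poly_add:
  assumes "matrix_poly t f" "matrix_poly t g"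
  shows "matrix_poly t (\<lambda>A. f A + g A)"
proof -
  obtain F c where F: "finite F" "\<forall>\<alpha>\<in>F. mdeg \<alpha> \<le> t" "f = (\<lambda>A. \<Sum>\<alpha>\<in>F. c \<alpha> * monom_mat \<alpha> A)"
    using assms(1) unfolding matrix_poly_def by blast
  obtain G d where G: "finite G" "\<forall>\<alpha>\<in>G. mdeg \<alpha> \<le> t" "g = (\<lambda>A. \<Sum>\<alpha>\<in>G. d \<alpha> * monom_mat \<alpha> A)"
    using assms(2) unfolding matrix_poly_def by blast
  have "matrix_poly t (\<lambda>A. \<Sum>i\<in>F <+> G. case_sum c d i * monom_mat (case_sum id id i) A)"
    using F G by (intro matrix_poly_sum_monoms) auto
  then show ?thesis
    using F G by (simp add: sum.Plus)
qed

lemma matrix_poly_scale: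
  assumes "matrix_poly t f"
  shows "matrix_poly t (\<lambda>A. r * f A)"
proof -
  obtain F c where F: "finite F" "\<forall>\<alpha>\<in>F. mdeg \<alpha> \<le> t" "f = (\<lambda>A. \<Sum>\<alpha>\<in>F. c \<alpha> * monom_mat \<alpha> A)"
    using assms unfolding matrix_poly_def by blast
  have "matrix_poly t (\<lambda>A. \<Sum>\<alpha>\<in>F. (r * c \<alpha>) * monom_mat \<alpha> A)"
    using F by (intro matrix_poly_sum_monoms) auto
  then show ?thesis
    using F by (simp add: sum_distrib_left mult.assoc)
qed

lemma monom_mat_add: "monom_mat (\<lambda>ij. \<alpha> ij + \<beta> ij) A = monom_mat \<alpha> A * monom_mat \<beta> A"
  unfolding monom_mat_def by (simp add: prod.distrib power_add)

lemma mdeg_add: "mdeg (\<lambda>ij. \<alpha> ij + \<beta> ij) = mdeg \<alpha> + mdeg \<beta>"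
  unfolding mdeg_def by (simp add: sum.distrib)

lemma matrix_poly_mult:
  assumes "matrix_poly s f" "matrix_poly t g"
  shows "matrix_poly (s + t) (\<lambda>A. f A * g A)"
proof -
  obtain F c where F: "finite F" "\<forall>\<alpha>\<in>F. mdeg \<alpha> \<le> s" "f = (\<lambda>A. \<Sum>\<alpha>\<in>F. c \<alpha> * monom_mat \<alpha> A)"
    using assms(1) unfolding matrix_poly_def by blast
  obtain G d where G: "finite G" "\<forall>\<alpha>\<in>G. mdeg \<alpha> \<le> t" "g = (\<lambda>A. \<Sum>\<alpha>\<in>G. d \<alpha> * monom_mat \<alpha> A)"
    using assms(2) unfolding matrix_poly_def by blast
  have "matrix_poly (s + t)
      (\<lambda>A. \<Sum>p\<in>F \<times> G. (c (fst p) * d (snd p)) * monom_mat (\<lambda>ij. fst p ij + snd p ij) A)"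
    using F G by (intro matrix_poly_sum_monoms) (auto simp: mdeg_add intro: add_mono)
  moreover have "(\<Sum>p\<in>F \<times> G. (c (fst p) * d (snd p)) * monom_mat (\<lambda>ij. fst p ij + snd p ij) A)
      = f A * g A"
    for A
    using F G
    by (simp add: sum_product sum.cartesian_product monom_mat_add mult_ac case_prod_beta)
  ultimately show ?thesis
    by simp
qed

lemma matrix_poly_prod:
  assumes "finite J" "\<And>j. j \<in> J \<Longrightarrow> matrix_poly (d j) (f j)"
  shows "matrix_poly (\<Sum>j\<in>J. d j) (\<lambda>A. \<Prod>j\<in>J. f j A)"
  using assms by (induction J rule: finite_induct) (auto intro: matrix_poly_const matrix_poly_mult)

lemma matrix_poly_trace: "matrix_poly 1 (\<lambda>A::real^'n::finite^'n. trace A)"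
proof -
  define e :: "'n \<Rightarrow> 'n \<times> 'n \<Rightarrow> nat" where "e i ij = (if ij = (i, i) then 1 else 0)" for i ij
  have "monom_mat (e i) A = A $ i $ i" for i and A :: "real^'n^'n"
    unfolding monom_mat_def e_def by (simp add: if_distrib[of "\<lambda>k. _ ^ k"] prod.If_cases)
  moreover have "mdeg (e i) = 1" for i
    unfolding mdeg_def e_def by simp
  ultimately show ?thesis
    using matrix_poly_sum_monoms[of UNIV e 1 "\<lambda>_. 1"] by (simp add: trace_def)
qed

lemma matrix_poly_affine_trace: "matrix_poly 1 (\<lambda>A::real^'n::finite^'n. a * trace A + b)"
  by (intro matrix_poly_add matrix_poly_scale matrix_poly_trace matrix_poly_mono[OF matrix_poly_const]) simp

definition trace_lagrange :: "(nat \<Rightarrow> real) \<Rightarrow> nat \<Rightarrow> real^'n::finite^'n \<Rightarrow> real" where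
  "trace_lagrange c i A = (\<Prod>j<i. (trace A - c j) / (c i - c j))"

lemma matrix_poly_trace_lagrange: "matrix_poly i (trace_lagrange c i)"
proof -
  have "matrix_poly 1 (\<lambda>A::real^'n^'n. (trace A - c j) / (c i - c j))" for j
  proof -
    have "(\<lambda>A::real^'n^'n. (trace A - c j) / (c i - c j))
        = (\<lambda>A. (1 / (c i - c j)) * trace A + (- c j / (c i - c j)))"
      by (simp add: fun_eq_iff diff_divide_distrib)
    then show ?thesis
      by (metis matrix_poly_affine_trace)
  qed
  then have "matrix_poly (\<Sum>j<i. 1) (\<lambda>A::real^'n^'n. \<Prod>j<i. (trace A - c j) / (c i - c j))"
    by (intro matrix_poly_prod) simp_all
  then show ?thesis
    by (simp add: trace_lagrange_def[abs_def])
qed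

lemma trace_lagrange_diag:
  assumes "\<And>j. j < i \<Longrightarrow> c j \<noteq> c i" "trace A = c i"
  shows "trace_lagrange c i A = 1"
proof -
  have factor_one: "(trace A - c j) / (c i - c j) = 1" if "j < i" for j
    using assms(1)[OF that] assms(2) by simp
  show ?thesis
    unfolding trace_lagrange_def by (intro prod.neutral ballI) (simp add: factor_one)
qed

lemma trace_lagrange_below:
  assumes "j < i" "trace A = c j"
  shows "trace_lagrange c i A = 0"
  unfolding trace_lagrange_def using assms by (subst prod_zero_iff) auto

lemma grass_subset_symmat: "grass k \<subseteq> symmat"
  unfolding grass_def symmat_def by auto

lemma trace_grass: "A \<in> grass k \<Longrightarrow> trace A = real k"
  unfolding grass_def by simp

lemma PolOn_eq_image:
  fixes M :: "(real^'n::finite^'n) set"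
  assumes "M \<subseteq> symmat"
  shows "PolOn t M = (\<lambda>f A. if A \<in> M then f A else 0) ` {f. matrix_poly t f}"
proof -
  have PolSym_eq: "PolSym t = (\<lambda>f (A::real^'n^'n). if A \<in> symmat then f A else 0) ` {f. matrix_poly t f}"
  proof (intro set_eqI iffI)
    fix p assume "p \<in> PolSym t"
    then obtain F c where F: "finite F" "\<forall>\<alpha>\<in>F. mdeg \<alpha> \<le> t"
        and p: "p = (\<lambda>A. if A \<in> symmat then \<Sum>\<alpha>\<in>F. c \<alpha> * monom_mat \<alpha> A else 0)"
      unfolding PolSym_def by blast
    have "matrix_poly t (\<lambda>A. \<Sum>\<alpha>\<in>F. c \<alpha> * monom_mat \<alpha> A)"
      unfolding matrix_poly_def using F by blast
    then show "p \<in> (\<lambda>f A. if A \<in> symmat then f A else 0) ` {f. matrix_poly t f}"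
      unfolding p by (intro image_eqI[of _ _ "\<lambda>A. \<Sum>\<alpha>\<in>F. c \<alpha> * monom_mat \<alpha> A"]) simp_all
  next
    fix p assume "p \<in> (\<lambda>f A. if A \<in> symmat then f A else 0) ` {f. matrix_poly t f}"
    then obtain F c where "finite F" "\<forall>\<alpha>\<in>F. mdeg \<alpha> \<le> t"
        "p = (\<lambda>A. if A \<in> symmat then \<Sum>\<alpha>\<in>F. c \<alpha> * monom_mat \<alpha> A else 0)"
      unfolding matrix_poly_def by auto
    then show "p \<in> PolSym t"
      unfolding PolSym_def by blast
  qed
  have cutoff_comp: "(\<lambda>p A. if A \<in> M then p A else 0) \<circ> (\<lambda>f A. if A \<in> symmat then f A else 0)
      = (\<lambda>f A. if A \<in> M then f A else 0)"
    using assms by (auto simp: fun_eq_iff)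
  have "PolOn t M = (\<lambda>p A. if A \<in> M then p A else 0) ` PolSym t"
    unfolding PolOn_def by blast
  also have "\<dots> = (\<lambda>f A. if A \<in> M then f A else 0) ` {f. matrix_poly t f}"
    by (simp only: PolSym_eq image_comp cutoff_comp)
  finally show ?thesis .
qed

lemma PolOn_vanishes: "g \<in> PolOn t M \<Longrightarrow> A \<notin> M \<Longrightarrow> g A = 0"
  unfolding PolOn_def by auto

lemma PolOn_weighted_lift:
  assumes "M \<subseteq> N" "N \<subseteq> symmat" "matrix_poly s w" "b \<in> PolOn t M"
  obtains l where "l \<in> PolOn (s + t) N" "\<And>A. A \<in> M \<Longrightarrow> l A = w A * b A"
    "\<And>A. w A = 0 \<Longrightarrow> l A = 0"
proof -
  obtain f where f: "matrix_poly t f" "b = (\<lambda>A. if A \<in> M then f A else 0)"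
    using assms(4) unfolding PolOn_eq_image[OF order_trans[OF assms(1,2)]] by blast
  let ?l = "\<lambda>A. if A \<in> N then w A * f A else 0"
  have "?l \<in> PolOn (s + t) N"
    unfolding PolOn_eq_image[OF assms(2)]
    using matrix_poly_mult[OF assms(3) f(1)] by (intro image_eqI[of _ _ "\<lambda>A. w A * f A"]) simp_all
  then show ?thesis
    using f(2) assms(1) by (intro that[of ?l]) auto
qed

lemma finite_mdeg_le: "finite {\<alpha>::'n::finite \<times> 'n \<Rightarrow> nat. mdeg \<alpha> \<le> t}"
proof (rule finite_subset)
  show "{\<alpha>::'n \<times> 'n \<Rightarrow> nat. mdeg \<alpha> \<le> t} \<subseteq> PiE UNIV (\<lambda>_. {..t})"
  proof
    fix \<alpha> :: "'n \<times> 'n \<Rightarrow> nat" assume "\<alpha> \<in> {\<alpha>. mdeg \<alpha> \<le> t}"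
    then have "\<alpha> ij \<le> t" for ij
      using member_le_sum[of ij UNIV \<alpha>] unfolding mdeg_def by simp
    then show "\<alpha> \<in> PiE UNIV (\<lambda>_. {..t})"
      by (simp add: PiE_UNIV_domain)
  qed
qed (simp add: finite_PiE)

lemma PolOn_finite_span:
  obtains W where "finite W" "PolOn t M \<subseteq> real_fun.span W"
proof
  let ?m = "\<lambda>\<alpha> A. if A \<in> M \<and> A \<in> symmat then monom_mat \<alpha> A else 0"
  show "finite (?m ` {\<alpha>. mdeg \<alpha> \<le> t})"
    using finite_mdeg_le by blast
  show "PolOn t M \<subseteq> real_fun.span (?m ` {\<alpha>. mdeg \<alpha> \<le> t})"
  proof
    fix g assume "g \<in> PolOn t M"
    then obtain F c where F: "finite F" "\<forall>\<alpha>\<in>F. mdeg \<alpha> \<le> t"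
        "g = (\<lambda>A. if A \<in> M then if A \<in> symmat then \<Sum>\<alpha>\<in>F. c \<alpha> * monom_mat \<alpha> A else 0 else 0)"
      unfolding PolOn_def PolSym_def by blast
    then have "g = (\<Sum>\<alpha>\<in>F. (\<lambda>A. c \<alpha> * ?m \<alpha> A))"
      by (auto simp: fun_eq_iff sum_fun_apply)
    also have "\<dots> \<in> real_fun.span (?m ` {\<alpha>. mdeg \<alpha> \<le> t})"
      using F(2) by (intro real_fun.span_sum real_fun.span_scale real_fun.span_base) auto
    finally show "g \<in> real_fun.span (?m ` {\<alpha>. mdeg \<alpha> \<le> t})" .
  qed
qed

lemma PolOn_basis_exists:
  obtains B where "finite B" "B \<subseteq> PolOn t M" "real_fun.independent B" "card B = fdim (PolOn t M)"
proof -
  obtain W where W: "finite W" "PolOn t M \<subseteq> real_fun.span W"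
    by (rule PolOn_finite_span)
  show ?thesis
    by (rule finite_basis_exists[OF W(2,1)]) (rule that)
qed

lemma card_le_fdim_PolOn:
  assumes "S \<subseteq> PolOn t M" "real_fun.independent S"
  shows "card S \<le> fdim (PolOn t M)"
proof -
  obtain W where W: "finite W" "PolOn t M \<subseteq> real_fun.span W"
    by (rule PolOn_finite_span)
  show ?thesis
    by (rule card_le_fdim[OF W(2,1) assms])
qed

lemma grassK_subset_symmat: "grassK K \<subseteq> symmat"
  using grass_subset_symmat by (auto simp: grassK_def)

lemma PolOn_grassK_lift:
  fixes ks :: "nat list"
  assumes "distinct ks" "i < length ks" "i \<le> t"
    and b: "b \<in> PolOn (t - i) (grass (ks ! i) :: (real^'n::finite^'n) set)"
  obtains l where "l \<in> PolOn t (grassK (set ks))" "\<And>A. A \<in> grass (ks ! i) \<Longrightarrow> l A = b A"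
    "\<And>j A. j < i \<Longrightarrow> A \<in> grass (ks ! j) \<Longrightarrow> l A = 0"
proof -
  let ?w = "trace_lagrange (\<lambda>j. real (ks ! j)) i :: real^'n^'n \<Rightarrow> real"
  have "ks ! i \<in> set ks"
    using assms(2) by simp
  then have "grass (ks ! i) \<subseteq> grassK (set ks)"
    unfolding grassK_def by blast
  then obtain l where l: "l \<in> PolOn (i + (t - i)) (grassK (set ks))"
      "\<And>A. A \<in> grass (ks ! i) \<Longrightarrow> l A = ?w A * b A" "\<And>A. ?w A = 0 \<Longrightarrow> l A = 0"
    by (rule PolOn_weighted_lift[OF _ grassK_subset_symmat matrix_poly_trace_lagrange b]) blast
  have "ks ! j \<noteq> ks ! i" if "j < i" for j
    using assms(1,2) that by (simp add: nth_eq_iff_index_eq)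
  then have "?w A = 1" if "A \<in> grass (ks ! i)" for A
    using that by (intro trace_lagrange_diag) (simp_all add: trace_grass)
  moreover have "?w A = 0" if "j < i" "A \<in> grass (ks ! j)" for j A
    using that(1) trace_grass[OF that(2)] by (rule trace_lagrange_below)
  moreover have "i + (t - i) = t"
    using assms(3) by simp
  ultimately show ?thesis
    using l by (intro that[of l]) simp_all
qed

theorem mainTheorem5:
  fixes ks :: "nat list" and t :: nat
  assumes "CARD('n::finite) \<ge> 2"
    and "ks \<noteq> []"
    and "distinct ks"
    and "set ks \<subseteq> {1..CARD('n) - 1}"
    and "\<forall>i j. i < j \<and> j < length ks \<longrightarrow>
           min (ks ! i) (CARD('n) - ks ! i) \<ge> min (ks ! j) (CARD('n) - ks ! j)"
  shows "fdim (PolOn t (grassK (set ks) :: (real^'n^'n) set))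
         \<ge> (\<Sum>i < min (t + 1) (length ks). fdim (PolOn (t - i) (grass (ks ! i) :: (real^'n^'n) set)))"
proof -
  define n where "n = min (t + 1) (length ks)"
  define G :: "nat \<Rightarrow> (real^'n^'n) set" where "G i = grass (ks ! i)" for i
  let ?GK = "grassK (set ks) :: (real^'n^'n) set"
  have "\<exists>B. finite B \<and> B \<subseteq> PolOn (t - i) (G i) \<and> real_fun.independent B
      \<and> card B = fdim (PolOn (t - i) (G i))" for i
    by (rule PolOn_basis_exists) blast
  then obtain B where B: "\<And>i. finite (B i)" "\<And>i. B i \<subseteq> PolOn (t - i) (G i)"
      "\<And>i. real_fun.independent (B i)" "\<And>i. card (B i) = fdim (PolOn (t - i) (G i))"
    by metis
  have "\<exists>l. l \<in> PolOn t ?GK \<and> (\<forall>A\<in>G i. l A = b A) \<and> (\<forall>j A. j < i \<longrightarrow> A \<in> G j \<longrightarrow> l A = 0)"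
    if "i < n" "b \<in> B i" for i b
  proof -
    have "i < length ks" "i \<le> t"
      using that(1) by (simp_all add: n_def)
    moreover have "b \<in> PolOn (t - i) (grass (ks ! i))"
      using that(2) B(2) unfolding G_def by blast
    ultimately show ?thesis
      unfolding G_def by (rule PolOn_grassK_lift[OF assms(3)]) blast
  qed
  then obtain L where L: "\<And>i b. i < n \<Longrightarrow> b \<in> B i \<Longrightarrow> L i b \<in> PolOn t ?GK
      \<and> (\<forall>A\<in>G i. L i b A = b A) \<and> (\<forall>j A. j < i \<longrightarrow> A \<in> G j \<longrightarrow> L i b A = 0)"
    by metis
  have S: "real_fun.independent (\<Union>i<n. L i ` B i) \<and> card (\<Union>i<n. L i ` B i) = (\<Sum>i<n. card (B i))"
  proof (rule independent_triangular_UN[where G = G])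
    show "b x = 0" if "i < n" "b \<in> B i" "x \<notin> G i" for i b x
      using PolOn_vanishes[of b "t - i" "G i" x] B(2)[of i] that by blast
  qed (use B L in blast)+
  then have "(\<Sum>i<n. card (B i)) = card (\<Union>i<n. L i ` B i)"
    by simp
  also have "\<dots> \<le> fdim (PolOn t ?GK)"
    using L S by (intro card_le_fdim_PolOn) blast+
  finally show ?thesis
    by (simp add: B(4) n_def G_def)
qed

end
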